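(* Let $A,B,C$ be tridendriform algebras over a field $\mathbb{K}$. Then, under the canonical identification of $\overline{A}\otimes(\overline{B}\otimes\overline{C})$ with $(\overline{A}\otimes\overline{B})\otimes\overline{C}$, the tridendriform algebras $A\overline{\otimes}(B\overline{\otimes}C)$ and $(A\overline{\otimes}B)\overline{\otimes}C$ coincide: they have the same underlying subspace (spanned by the $a\otimes b\otimes c$, $a\in\overline A,b\in\overline B,c\in\overline C$, not all three equal to $1$) and the same three products.
   Context: A tridendriform algebra over $\mathbb{K}$ is a vector space $A$ with three bilinear products $\prec,\cdot,\succ$ such that, writing $a*b=a\prec b+a\cdot b+a\succ b$, for all $a,b,c\in A$: $(a\prec b)\prec c=a\prec(b*c)$, $(a\succ b)\prec c=a\succ(b\prec c)$, $(a*b)\succ c=a\succ(b\succ c)$, $(a\succ b)\cdot c=a\succ(b\cdot c)$, $(a\prec b)\cdot c=a\cdot(b\succ c)$, $(a\cdot b)\prec c=a\cdot(b\prec c)$, $(a\cdot b)\cdot c=a\cdot(b\cdot c)$. The augmentation of a tridendriform algebra $A$ is $\overline{A}=\mathbb{K}1\oplus A$, where $1$ is a unit for $*$, and for $a\in A$: $1\prec a=0$, $a\prec 1=a$, $1\succ a=a$, $a\succ 1=0$, $1\cdot a=a\cdot 1=0$. For tridendriform algebras $A,B$, $A\overline{\otimes}B:=(A\otimes B)\oplus(\mathbb{K}1\otimes B)\oplus(A\otimes\mathbb{K}1)\subseteq\overline A\otimes\overline B$, with products, for $\ltimes\in\{\prec,\cdot,\succ\}$: $(a\otimes 1)\ltimes(c\otimes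 1)=(a\ltimes c)\otimes 1$ for $a,c\in A$, and $(a\otimes b)\ltimes(c\otimes d)=(a*c)\otimes(b\ltimes d)$ whenever $b,d$ are not both equal to $1$ (augmented conventions). This is a tridendriform algebra, so $A\overline{\otimes}(B\overline{\otimes}C)$ and $(A\overline{\otimes}B)\overline{\otimes}C$ are defined (the augmentation of $B\overline\otimes C$ is identified with $\overline B\otimes\overline C$, its unit being $1\otimes 1$). *)

theory Defs
  imports Main
begin

text \<open>A vector space over the field 'k is represented via a basis:
  elements are finitely supported functions from the basis index set to 'k.
  A tridendriform algebra is given by a basis set bas, a fresh index unt
  (the basis vector of the adjoined unit 1 of the augmentation), and the
  structure constants of the three products on basis vectors; the products on
  arbitrary elements are their bilinear extensions.\<close>

datatype op3 = Lt | Dt | Rt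

record ('i, 'k) tds =
  bas :: "'i set"
  unt :: 'i
  pL :: "'i \<Rightarrow> 'i \<Rightarrow> 'i \<Rightarrow> 'k"
  pD :: "'i \<Rightarrow> 'i \<Rightarrow> 'i \<Rightarrow> 'k"
  pR :: "'i \<Rightarrow> 'i \<Rightarrow> 'i \<Rightarrow> 'k"

definition prd :: "('i, 'k) tds \<Rightarrow> op3 \<Rightarrow> 'i \<Rightarrow> 'i \<Rightarrow> 'i \<Rightarrow> 'k" where
  "prd T w = (case w of Lt \<Rightarrow> pL T | Dt \<Rightarrow> pD T | Rt \<Rightarrow> pR T)"

definition supp :: "('i \<Rightarrow> 'k::zero) \<Rightarrow> 'i set" where
  "supp f = {p. f p \<noteq> 0}"

definition vsp :: "'i set \<Rightarrow> ('i \<Rightarrow> 'k::zero) set" where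
  "vsp I = {x. finite (supp x) \<and> supp x \<subseteq> I}"

definition bvec :: "'i \<Rightarrow> 'i \<Rightarrow> 'k::{zero,one}" where
  "bvec i = (\<lambda>p. if p = i then 1 else 0)"

definition vplus :: "('i \<Rightarrow> 'k::plus) \<Rightarrow> ('i \<Rightarrow> 'k) \<Rightarrow> 'i \<Rightarrow> 'k" where
  "vplus x y = (\<lambda>r. x r + y r)"

definition bext :: "('i \<Rightarrow> 'i \<Rightarrow> 'i \<Rightarrow> 'k::comm_semiring_1) \<Rightarrow> ('i \<Rightarrow> 'k) \<Rightarrow> ('i \<Rightarrow> 'k) \<Rightarrow> 'i \<Rightarrow> 'k" where
  "bext P x y = (\<lambda>r. \<Sum>p\<in>supp x. \<Sum>q\<in>supp y. x p * y q * P p q r)"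

text \<open>Tensor product of vectors: basis of V \<otimes> W indexed by pairs.\<close>
definition tens :: "('i \<Rightarrow> 'k::times) \<Rightarrow> ('j \<Rightarrow> 'k) \<Rightarrow> ('i \<times> 'j) \<Rightarrow> 'k" where
  "tens f g = (\<lambda>(p, q). f p * g q)"

definition is_tridend :: "('i, 'k::field) tds \<Rightarrow> bool" where
  "is_tridend T \<longleftrightarrow>
     unt T \<notin> bas T \<and>
     (\<forall>w. \<forall>i\<in>bas T. \<forall>j\<in>bas T. prd T w i j \<in> vsp (bas T)) \<and>
     (\<forall>a\<in>vsp (bas T). \<forall>b\<in>vsp (bas T). \<forall>c\<in>vsp (bas T).
        let l = bext (pL T); d = bext (pD T); r = bext (pR T);
            s = (\<lambda>x y. vplus (vplus (l x y) (d x y)) (r x y))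
        in l (l a b) c = l a (s b c) \<and>
           l (r a b) c = r a (l b c) \<and>
           r (s a b) c = r a (r b c) \<and>
           d (r a b) c = r a (d b c) \<and>
           d (l a b) c = d a (r b c) \<and>
           l (d a b) c = d a (l b c) \<and>
           d (d a b) c = d a (d b c))"

definition augstar :: "('i, 'k::field) tds \<Rightarrow> 'i \<Rightarrow> 'i \<Rightarrow> 'i \<Rightarrow> 'k" where
  "augstar T i j =
     (if i = unt T then bvec j
      else if j = unt T then bvec i
      else vplus (vplus (pL T i j) (pD T i j)) (pR T i j))"

text \<open>Augmented \<prec>, \<cdot>, \<succ> on basis vectors, not both equal to the unit.\<close>
definition augop :: "('i, 'k::field) tds \<Rightarrow> op3 \<Rightarrow> 'i \<Rightarrow> 'i \<Rightarrow> 'i \<Rightarrow> 'k" where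
  "augop T w i j =
     (if i = unt T then (if w = Rt then bvec j else (\<lambda>_. 0))
      else if j = unt T then (if w = Lt then bvec i else (\<lambda>_. 0))
      else prd T w i j)"

definition tprod :: "('i, 'k::field) tds \<Rightarrow> ('j, 'k) tds \<Rightarrow> op3 \<Rightarrow>
    'i \<times> 'j \<Rightarrow> 'i \<times> 'j \<Rightarrow> 'i \<times> 'j \<Rightarrow> 'k" where
  "tprod T S w p q =
     (if snd p = unt S \<and> snd q = unt S
      then tens (prd T w (fst p) (fst q)) (bvec (unt S))
      else tens (augstar T (fst p) (fst q)) (augop S w (snd p) (snd q)))"

text \<open>A \<otimes>-bar B: basis = pairs of augmented basis indices except (1,1); its
  augmentation unit is 1 \<otimes> 1, i.e. the index (unt T, unt S).\<close>
definition tensor :: "('i, 'k::field) tds \<Rightarrow> ('j, 'k) tds \<Rightarrow> ('i \<times> 'j, 'k) tds" where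
  "tensor T S =
     \<lparr> bas = (insert (unt T) (bas T) \<times> insert (unt S) (bas S)) - {(unt T, unt S)},
       unt = (unt T, unt S),
       pL = tprod T S Lt, pD = tprod T S Dt, pR = tprod T S Rt \<rparr>"

definition reassoc :: "('a \<times> 'b \<times> 'c \<Rightarrow> 'k) \<Rightarrow> ('a \<times> 'b) \<times> 'c \<Rightarrow> 'k" where
  "reassoc x = (\<lambda>((i, j), l). x (i, (j, l)))"

end

theory Submission
  imports Defs
begin

text \<open>On basis vectors both products are given by the same rule: writing \<ltimes> for the
  product in question, (a\<otimes>b\<otimes>c) \<ltimes> (a'\<otimes>b'\<otimes>c') is (a*a')\<otimes>(b*b')\<otimes>(c\<ltimes>c') unless
  c = c' = 1, in which case it is (a*a')\<otimes>(b\<ltimes>b')\<otimes>1 unless also b = b' = 1, and then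
  it is (a\<ltimes>a')\<otimes>1\<otimes>1. For the left-nested product this rests on the augmented
  star of A\<otimes>B being the tensor product of the augmented stars. Bilinear extension
  commutes with relabelling the basis, so the products agree on all vectors.\<close>

definition lassoc :: "'a \<times> 'b \<times> 'c \<Rightarrow> ('a \<times> 'b) \<times> 'c" where
  "lassoc = (\<lambda>(i, j, l). ((i, j), l))"

definition rassoc :: "('a \<times> 'b) \<times> 'c \<Rightarrow> 'a \<times> 'b \<times> 'c" where
  "rassoc = (\<lambda>((i, j), l). (i, j, l))"

lemma rassoc_simp [simp]: "rassoc ((i, j), l) = (i, j, l)"
  by (simp add: rassoc_def)

lemma rassoc_lassoc [simp]: "rassoc (lassoc p) = p"
  by (simp add: lassoc_def rassoc_def split: prod.split)

lemma lassoc_rassoc [simp]: "lassoc (rassoc p) = p"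
  by (simp add: lassoc_def rassoc_def split: prod.split)

lemma bij_rassoc: "bij rassoc"
  by (rule o_bij[where g = lassoc]) (simp_all add: fun_eq_iff)

lemma image_lassoc: "lassoc ` S = rassoc -` S"
  by (rule set_eqI) (metis image_iff lassoc_rassoc rassoc_lassoc vimage_eq)

lemma reassoc_eq_comp: "reassoc x = x \<circ> rassoc"
  by (simp add: reassoc_def rassoc_def fun_eq_iff)

lemma bext_comp_bij:
  fixes g :: "'i \<Rightarrow> 'j" and x y :: "'j \<Rightarrow> 'k::comm_semiring_1"
  assumes "bij g"
    and "\<And>p q. g p \<in> supp x \<Longrightarrow> g q \<in> supp y \<Longrightarrow> P' p q r = P (g p) (g q) (g r)"
  shows "bext P' (x \<circ> g) (y \<circ> g) r = bext P x y (g r)"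
proof -
  have supp_comp: "supp (z \<circ> g) = g -` supp z" for z :: "'j \<Rightarrow> 'k"
    by (simp add: supp_def)
  have bij_supp: "bij_betw g (g -` S) S" for S
    using assms(1) by (rule bij_betw_subset)
      (simp_all add: surj_image_vimage_eq bij_is_surj[OF assms(1)])
  have reindex: "(\<Sum>p\<in>g -` S. F (g p)) = (\<Sum>p\<in>S. F p)" for S and F :: "'j \<Rightarrow> 'k"
    by (rule sum.reindex_bij_betw[OF bij_supp])
  have "bext P' (x \<circ> g) (y \<circ> g) r
      = (\<Sum>p\<in>g -` supp x. \<Sum>q\<in>g -` supp y. x (g p) * y (g q) * P (g p) (g q) (g r))"
    unfolding bext_def supp_comp by (intro sum.cong refl) (simp add: assms(2))
  also have "\<dots> = (\<Sum>p\<in>g -` supp x. \<Sum>q\<in>supp y. x (g p) * y q * P (g p) q (g r))"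
    by (intro sum.cong refl reindex)
  also have "\<dots> = bext P x y (g r)"
    unfolding bext_def by (rule reindex)
  finally show ?thesis .
qed

lemma tens_bvec: "tens (bvec i) (bvec j) = (bvec (i, j) :: _ \<Rightarrow> 'k::comm_semiring_1)"
  by (auto simp: tens_def bvec_def fun_eq_iff)

lemma unt_tensor [simp]: "unt (tensor T S) = (unt T, unt S)"
  by (simp add: tensor_def)

lemma bas_tensor:
  "bas (tensor T S) = (insert (unt T) (bas T) \<times> insert (unt S) (bas S)) - {(unt T, unt S)}"
  by (simp add: tensor_def)

lemma prd_tensor: "prd (tensor T S) w = tprod T S w"
  by (cases w) (simp_all add: prd_def tensor_def)

lemma augop_sum_eq_augstar:
  assumes "\<not> (b = unt B \<and> b' = unt B)"
  shows "vplus (vplus (augop B Lt b b') (augop B Dt b b')) (augop B Rt b b') = augstar B b b'"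
  using assms by (auto simp: augop_def augstar_def vplus_def prd_def fun_eq_iff)

lemma augstar_tensor:
  "augstar (tensor A B) (a, b) (a', b') = tens (augstar A a a') (augstar B b b')"
proof (cases "(a, b) = (unt A, unt B) \<or> (a', b') = (unt A, unt B)")
  case True
  then show ?thesis by (auto simp: augstar_def tens_bvec)
next
  case non_unit: False
  show ?thesis
  proof (cases "b = unt B \<and> b' = unt B")
    case True
    with non_unit show ?thesis
      by (auto simp: augstar_def tensor_def tprod_def tens_def vplus_def prd_def fun_eq_iff
          algebra_simps)
  next
    case False
    have "augstar (tensor A B) (a, b) (a', b') =
        vplus (vplus (tprod A B Lt (a, b) (a', b')) (tprod A B Dt (a, b) (a', b')))
          (tprod A B Rt (a, b) (a', b'))"
      using non_unit by (auto simp: augstar_def tensor_def)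
    also have "\<dots> = tens (augstar A a a')
        (vplus (vplus (augop B Lt b b') (augop B Dt b b')) (augop B Rt b b'))"
      using False by (auto simp: tprod_def tens_def vplus_def fun_eq_iff algebra_simps)
    finally show ?thesis using augop_sum_eq_augstar[OF False] by simp
  qed
qed

lemma augop_tensor:
  "augop (tensor B C) w (b, c) (b', c') =
    (if c = unt C \<and> c' = unt C then tens (augop B w b b') (bvec (unt C))
     else tens (augstar B b b') (augop C w c c'))"
proof (cases "(b, c) = (unt B, unt C) \<or> (b', c') = (unt B, unt C)")
  case True
  then show ?thesis
    by (auto simp: augop_def augstar_def tens_bvec tens_def fun_eq_iff bvec_def)
next
  case False
  then have "augop (tensor B C) w (b, c) (b', c') = tprod B C w (b, c) (b', c')"
    by (auto simp: augop_def prd_tensor)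
  with False show ?thesis
    by (auto simp: tprod_def augop_def)
qed

lemma prd_tensor_assoc:
  assumes "(a, b, c) \<noteq> (unt A, unt B, unt C)" and "(a', b', c') \<noteq> (unt A, unt B, unt C)"
  shows "prd (tensor (tensor A B) C) w ((a, b), c) ((a', b'), c') ((a'', b''), c'')
       = prd (tensor A (tensor B C)) w (a, b, c) (a', b', c') (a'', b'', c'')"
proof (cases "b = unt B \<and> c = unt C \<and> b' = unt B \<and> c' = unt C")
  case True
  with assms show ?thesis
    by (auto simp: prd_tensor tprod_def tens_def bvec_def)
next
  case False
  then have right_nested: "prd (tensor A (tensor B C)) w (a, b, c) (a', b', c') (a'', b'', c'')
      = augstar A a a' a'' * augop (tensor B C) w (b, c) (b', c') (b'', c'')"
    by (auto simp: prd_tensor tprod_def tens_def)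
  show ?thesis
  proof (cases "c = unt C \<and> c' = unt C")
    case True
    with False have "\<not> (b = unt B \<and> b' = unt B)" by auto
    with True have "prd (tensor (tensor A B) C) w ((a, b), c) ((a', b'), c') ((a'', b''), c'')
        = augstar A a a' a'' * augop B w b b' b'' * bvec (unt C) c''"
      by (auto simp: prd_tensor tprod_def tens_def)
    then show ?thesis
      unfolding right_nested augop_tensor if_P[OF True] by (simp add: tens_def)
  next
    case False
    then have "prd (tensor (tensor A B) C) w ((a, b), c) ((a', b'), c') ((a'', b''), c'')
        = augstar A a a' a'' * augstar B b b' b'' * augop C w c c' c''"
      by (auto simp: prd_tensor tprod_def tens_def augstar_tensor)
    then show ?thesis
      unfolding right_nested augop_tensor if_not_P[OF False] by (simp add: tens_def mult.assoc)
  qed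
qed

lemma bas_tensor_assoc:
  "rassoc -` bas (tensor A (tensor B C)) = bas (tensor (tensor A B) C)"
  by (rule set_eqI) (auto simp: split_paired_all bas_tensor)

theorem mainTheorem4:
  fixes A :: "('a, 'k::field) tds" and B :: "('b, 'k) tds" and C :: "('c, 'k) tds"
  assumes "is_tridend A" and "is_tridend B" and "is_tridend C"
  shows "(\<lambda>(i, j, l). ((i, j), l)) ` bas (tensor A (tensor B C)) = bas (tensor (tensor A B) C)
    \<and> (\<forall>w. \<forall>x\<in>vsp (bas (tensor A (tensor B C))). \<forall>y\<in>vsp (bas (tensor A (tensor B C))).
          reassoc (bext (prd (tensor A (tensor B C)) w) x y)
          = bext (prd (tensor (tensor A B) C) w) (reassoc x) (reassoc y))"
proof (intro conjI allI ballI ext)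
  show "(\<lambda>(i, j, l). ((i, j), l)) ` bas (tensor A (tensor B C)) = bas (tensor (tensor A B) C)"
    unfolding lassoc_def[symmetric] image_lassoc by (rule bas_tensor_assoc)
next
  fix w and x y :: "'a \<times> 'b \<times> 'c \<Rightarrow> 'k" and r :: "('a \<times> 'b) \<times> 'c"
  assume "x \<in> vsp (bas (tensor A (tensor B C)))" and "y \<in> vsp (bas (tensor A (tensor B C)))"
  then have "supp x \<union> supp y \<subseteq> bas (tensor A (tensor B C))"
    by (auto simp: vsp_def)
  moreover obtain i j l where r: "r = ((i, j), l)"
    by (cases r) auto
  ultimately have "bext (prd (tensor (tensor A B) C) w) (x \<circ> rassoc) (y \<circ> rassoc) r
      = bext (prd (tensor A (tensor B C)) w) x y (rassoc r)"
    by (intro bext_comp_bij bij_rassoc)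
       (auto simp: r split_paired_all bas_tensor intro!: prd_tensor_assoc)
  then show "reassoc (bext (prd (tensor A (tensor B C)) w) x y) r
      = bext (prd (tensor (tensor A B) C) w) (reassoc x) (reassoc y) r"
    by (simp add: reassoc_eq_comp)
qed

end
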